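(* Let $G$ be a finite group. Then $h\mathrm{aut}(\jmath S(G))\cong\mathrm{Aut}(G)$ as groups.
   Context: For a finite group $G$, $S(G)=(G,[G])$ is the association scheme with $[G]=\{G_f\}_{f\in G}$, $G_f=\{(k,l)\in G\times G\mid k^{-1}l=f\}$. For an association scheme $(X,S)$ (finite set $X$ with a suitable partition $S$ of $X\times X$), the quasi-schemoid $\jmath(X,S)=(\mathcal{C},S)$ has $ob(\mathcal{C})=X$, $\mathrm{Hom}_{\mathcal{C}}(y,x)=\{(x,y)\}$, composition $(z,x)\circ(x,y)=(z,y)$, and partition $S$ of $mor(\mathcal{C})=X\times X$. A quasi-schemoid is a small category with a partition of its morphisms such that for blocks $\sigma,\tau,\mu$ and $f,g\in\mu$ the number of composable pairs $(a,b)\in\sigma\times\tau$ with $a\circ b=f$ equals that with $a\circ b=g$; a morphism of quasi-schemoids is a functor sending each block of the source partition into some block of the target partition. Product: $(\mathcal{C},S)\times(\mathcal{E},S')=(\mathcal{C}\times\mathcal{E},\{\sigma\times\tau\})$. $[1]$ has objects $0,1$ and one non-identity morphism $0\to1$; $I=([1],\{\{f\}\}_f)$. A homotopy $H\colon F\Rightarrow F'$ is a morphism $H\colon(\mathcal{C},S)\times I\to(\mathcal{D},S')$ with $H\circ\varepsilon_0=F$, $H\circ\varepsilon_1=F'$ ($\varepsilon_i(a)=(a,i)$, $\varepsilon_i(f)=(f,1_i)$). $F\sim F'$ means there is a homotopy $F\Rightarrow F'$ or $F'\Rightarrow F$; $F\simeq F'$ means a finite chain $F=F_0\sim\cdots\sim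 F_n=F'$. $h\mathrm{aut}(A)$ is the group of $\simeq$-classes of self-homotopy equivalences of $A$ (morphisms $F\colon A\to A$ with some $F'$ satisfying $FF'\simeq1$, $F'F\simeq1$) under composition. $\mathrm{Aut}(G)$ is the automorphism group of $G$. *)

theory Defs
  imports "HOL-Algebra.Algebra"
begin

text \<open>A small category: object set, morphism set, domain, codomain,
composition (comp g f = g o f when cod f = dom g), identities; together
with a partition Part of the morphism set.\<close>

record ('o, 'm) qschemoid =
  Obj   :: "'o set"
  Mor   :: "'m set"
  qdom  :: "'m \<Rightarrow> 'o"
  qcod  :: "'m \<Rightarrow> 'o"
  qcomp :: "'m \<Rightarrow> 'm \<Rightarrow> 'm"
  qid   :: "'o \<Rightarrow> 'm"
  Part  :: "'m set set"

definition is_category :: "('o, 'm) qschemoid \<Rightarrow> bool" where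
  "is_category C \<longleftrightarrow>
     (\<forall>f\<in>Mor C. qdom C f \<in> Obj C \<and> qcod C f \<in> Obj C) \<and>
     (\<forall>x\<in>Obj C. qid C x \<in> Mor C \<and> qdom C (qid C x) = x \<and> qcod C (qid C x) = x) \<and>
     (\<forall>f\<in>Mor C. \<forall>g\<in>Mor C. qcod C f = qdom C g \<longrightarrow>
        qcomp C g f \<in> Mor C \<and> qdom C (qcomp C g f) = qdom C f \<and> qcod C (qcomp C g f) = qcod C g) \<and>
     (\<forall>f\<in>Mor C. \<forall>g\<in>Mor C. \<forall>h\<in>Mor C. qcod C f = qdom C g \<longrightarrow> qcod C g = qdom C h \<longrightarrow>
        qcomp C h (qcomp C g f) = qcomp C (qcomp C h g) f) \<and>
     (\<forall>f\<in>Mor C. qcomp C (qid C (qcod C f)) f = f \<and> qcomp C f (qid C (qdom C f)) = f)"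

definition is_quasi_schemoid :: "('o, 'm) qschemoid \<Rightarrow> bool" where
  "is_quasi_schemoid C \<longleftrightarrow> is_category C \<and>
     (\<Union>(Part C) = Mor C) \<and> {} \<notin> Part C \<and>
     (\<forall>\<sigma>\<in>Part C. \<forall>\<tau>\<in>Part C. \<sigma> \<noteq> \<tau> \<longrightarrow> \<sigma> \<inter> \<tau> = {}) \<and>
     (\<forall>\<sigma>\<in>Part C. \<forall>\<tau>\<in>Part C. \<forall>\<mu>\<in>Part C. \<forall>f\<in>\<mu>. \<forall>g\<in>\<mu>.
        card {(a, b). a \<in> \<sigma> \<and> b \<in> \<tau> \<and> qcod C b = qdom C a \<and> qcomp C a b = f}
      = card {(a, b). a \<in> \<sigma> \<and> b \<in> \<tau> \<and> qcod C b = qdom C a \<and> qcomp C a b = g})"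

definition group_rel :: "('a, 'b) monoid_scheme \<Rightarrow> 'a \<Rightarrow> ('a \<times> 'a) set" where
  "group_rel G f = {(k, l). k \<in> carrier G \<and> l \<in> carrier G \<and> inv\<^bsub>G\<^esub> k \<otimes>\<^bsub>G\<^esub> l = f}"

definition group_scheme :: "('a, 'b) monoid_scheme \<Rightarrow> 'a set \<times> ('a \<times> 'a) set set" where
  "group_scheme G = (carrier G, group_rel G ` carrier G)"

text \<open>jmath(X,S): objects X, Hom(y,x) = {(x,y)}, (z,x) o (x,y) = (z,y), partition S.\<close>
definition jmath :: "'a set \<times> ('a \<times> 'a) set set \<Rightarrow> ('a, 'a \<times> 'a) qschemoid" where
  "jmath XS = \<lparr> Obj = fst XS, Mor = fst XS \<times> fst XS,
      qdom = snd, qcod = fst,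
      qcomp = (\<lambda>g f. (fst g, snd f)),
      qid = (\<lambda>x. (x, x)),
      Part = snd XS \<rparr>"

record ('o, 'm, 'p, 'n) qfunctor =
  fobj :: "'o \<Rightarrow> 'p"
  fmor :: "'m \<Rightarrow> 'n"

definition qs_morphism :: "('o, 'm) qschemoid \<Rightarrow> ('p, 'n) qschemoid \<Rightarrow> ('o, 'm, 'p, 'n) qfunctor \<Rightarrow> bool" where
  "qs_morphism A B F \<longleftrightarrow>
     fobj F \<in> Obj A \<rightarrow>\<^sub>E Obj B \<and> fmor F \<in> Mor A \<rightarrow>\<^sub>E Mor B \<and>
     (\<forall>f\<in>Mor A. qdom B (fmor F f) = fobj F (qdom A f) \<and> qcod B (fmor F f) = fobj F (qcod A f)) \<and>
     (\<forall>f\<in>Mor A. \<forall>g\<in>Mor A. qcod A f = qdom A g \<longrightarrow>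
        fmor F (qcomp A g f) = qcomp B (fmor F g) (fmor F f)) \<and>
     (\<forall>x\<in>Obj A. fmor F (qid A x) = qid B (fobj F x)) \<and>
     (\<forall>\<sigma>\<in>Part A. \<exists>\<tau>\<in>Part B. fmor F ` \<sigma> \<subseteq> \<tau>)"

definition qs_comp :: "('o, 'm) qschemoid \<Rightarrow> ('p, 'n, 'q, 'k) qfunctor \<Rightarrow> ('o, 'm, 'p, 'n) qfunctor
    \<Rightarrow> ('o, 'm, 'q, 'k) qfunctor" where
  "qs_comp A F G = \<lparr> fobj = compose (Obj A) (fobj F) (fobj G), fmor = compose (Mor A) (fmor F) (fmor G) \<rparr>"

definition qs_id :: "('o, 'm) qschemoid \<Rightarrow> ('o, 'm, 'o, 'm) qfunctor" where
  "qs_id A = \<lparr> fobj = (\<lambda>x\<in>Obj A. x), fmor = (\<lambda>f\<in>Mor A. f) \<rparr>"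

definition qs_prod :: "('o, 'm) qschemoid \<Rightarrow> ('p, 'n) qschemoid \<Rightarrow> ('o \<times> 'p, 'm \<times> 'n) qschemoid" where
  "qs_prod A B = \<lparr> Obj = Obj A \<times> Obj B, Mor = Mor A \<times> Mor B,
      qdom = (\<lambda>(f, g). (qdom A f, qdom B g)),
      qcod = (\<lambda>(f, g). (qcod A f, qcod B g)),
      qcomp = (\<lambda>(f, g) (f', g'). (qcomp A f f', qcomp B g g')),
      qid = (\<lambda>(x, y). (qid A x, qid B y)),
      Part = {\<sigma> \<times> \<tau> | \<sigma> \<tau>. \<sigma> \<in> Part A \<and> \<tau> \<in> Part B} \<rparr>"

text \<open>The category [1]: objects 0,1; a morphism (i,j) is the unique arrow i -> j,
 so the morphisms are (0,0) = 1_0, (1,1) = 1_1 and (0,1) : 0 -> 1.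
 I = ([1], discrete partition).\<close>
definition qsI :: "(nat, nat \<times> nat) qschemoid" where
  "qsI = \<lparr> Obj = {0, 1}, Mor = {(0, 0), (1, 1), (0, 1)},
      qdom = fst, qcod = snd,
      qcomp = (\<lambda>g f. (fst f, snd g)),
      qid = (\<lambda>x. (x, x)),
      Part = {{m} | m. m \<in> {(0, 0), (1, 1), (0, 1)}} \<rparr>"

definition qs_eps :: "('o, 'm) qschemoid \<Rightarrow> nat \<Rightarrow> ('o, 'm, 'o \<times> nat, 'm \<times> (nat \<times> nat)) qfunctor" where
  "qs_eps A i = \<lparr> fobj = (\<lambda>a\<in>Obj A. (a, i)), fmor = (\<lambda>f\<in>Mor A. (f, (i, i))) \<rparr>"

definition qs_homotopy :: "('o, 'm) qschemoid \<Rightarrow> ('p, 'n) qschemoid \<Rightarrow>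
    ('o, 'm, 'p, 'n) qfunctor \<Rightarrow> ('o, 'm, 'p, 'n) qfunctor \<Rightarrow>
    ('o \<times> nat, 'm \<times> (nat \<times> nat), 'p, 'n) qfunctor \<Rightarrow> bool" where
  "qs_homotopy A B F F' H \<longleftrightarrow> qs_morphism (qs_prod A qsI) B H \<and>
     qs_comp A H (qs_eps A 0) = F \<and> qs_comp A H (qs_eps A 1) = F'"

definition qs_sim :: "('o, 'm) qschemoid \<Rightarrow> ('p, 'n) qschemoid \<Rightarrow>
    (('o, 'm, 'p, 'n) qfunctor \<times> ('o, 'm, 'p, 'n) qfunctor) set" where
  "qs_sim A B = {(F, F'). \<exists>H. qs_homotopy A B F F' H \<or> qs_homotopy A B F' F H}"

definition qs_htpc :: "('o, 'm) qschemoid \<Rightarrow> ('p, 'n) qschemoid \<Rightarrow>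
    ('o, 'm, 'p, 'n) qfunctor \<Rightarrow> ('o, 'm, 'p, 'n) qfunctor \<Rightarrow> bool" where
  "qs_htpc A B F F' \<longleftrightarrow> (F, F') \<in> (qs_sim A B)\<^sup>*"

definition self_htpy_equiv :: "('o, 'm) qschemoid \<Rightarrow> ('o, 'm, 'o, 'm) qfunctor set" where
  "self_htpy_equiv A = {F. qs_morphism A A F \<and>
     (\<exists>F'. qs_morphism A A F' \<and> qs_htpc A A (qs_comp A F F') (qs_id A)
                             \<and> qs_htpc A A (qs_comp A F' F) (qs_id A))}"

definition htpy_class :: "('o, 'm) qschemoid \<Rightarrow> ('o, 'm, 'o, 'm) qfunctor \<Rightarrow> ('o, 'm, 'o, 'm) qfunctor set" where
  "htpy_class A F = {G \<in> self_htpy_equiv A. qs_htpc A A F G}"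

definition haut :: "('o, 'm) qschemoid \<Rightarrow> ('o, 'm, 'o, 'm) qfunctor set monoid" where
  "haut A = \<lparr> carrier = htpy_class A ` self_htpy_equiv A,
      monoid.mult = (\<lambda>U V. htpy_class A (qs_comp A (SOME F1. F1 \<in> U) (SOME F2. F2 \<in> V))),
      monoid.one = htpy_class A (qs_id A) \<rparr>"

end

theory Submission
  imports Defs
begin

text \<open>
  A functor from \<open>\<jmath> S(G)\<close> to itself is determined by its object map \<open>\<phi> : G \<rightarrow> G\<close>, and it
  respects the partition \<open>{G\<^sub>f}\<close> iff \<open>\<phi>(k)\<inverse>\<phi>(l)\<close> depends only on \<open>k\<inverse>l\<close>, i.e. iff \<open>\<phi>\<close> is a
  group endomorphism followed by a right translation. A homotopy \<open>H : F \<Rightarrow> F'\<close> maps the arrows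
  \<open>(x,x) \<times> (0 \<rightarrow> 1)\<close>, which all lie in the block \<open>G\<^sub>1 \<times> {0 \<rightarrow> 1}\<close>, into a single block \<open>G\<^sub>g\<close>;
  hence \<open>F'\<close> is \<open>F\<close> followed by right translation by \<open>g\<inverse>\<close>, and conversely every right translation
  is realised by a homotopy. So every homotopy class contains exactly one endomorphism of \<open>G\<close>,
  the self-homotopy equivalences are the classes of automorphisms, and composition of classes is
  composition of automorphisms.
\<close>

lemma qs_htpc_refl: "qs_htpc A B F F"
  by (simp add: qs_htpc_def)

lemma qs_htpc_sym:
  assumes "qs_htpc A B F F'"
  shows "qs_htpc A B F' F"
proof -
  have "sym (qs_sim A B)"
    by (auto simp: qs_sim_def intro: symI)
  then have "sym ((qs_sim A B)\<^sup>*)"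
    by (rule sym_rtrancl)
  then show ?thesis
    using assms by (auto simp: qs_htpc_def dest: symD)
qed

lemma qs_htpc_trans: "qs_htpc A B F F' \<Longrightarrow> qs_htpc A B F' F'' \<Longrightarrow> qs_htpc A B F F''"
  unfolding qs_htpc_def by (rule rtrancl_trans)

lemma htpy_class_eq:
  assumes "qs_htpc A A F F'"
  shows "htpy_class A F = htpy_class A F'"
  using qs_htpc_trans[OF assms] qs_htpc_trans[OF qs_htpc_sym[OF assms]]
  unfolding htpy_class_def by blast

lemma self_htpy_equiv_in_htpy_class: "F \<in> self_htpy_equiv A \<Longrightarrow> F \<in> htpy_class A F"
  by (simp add: htpy_class_def qs_htpc_refl)

lemma haut_mult_htpy_class:
  assumes "F \<in> self_htpy_equiv A" "F' \<in> self_htpy_equiv A"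
    and comp_cong: "\<And>F1 F1'. qs_htpc A A F F1 \<Longrightarrow> qs_htpc A A F' F1' \<Longrightarrow>
      qs_htpc A A (qs_comp A F F') (qs_comp A F1 F1')"
  shows "htpy_class A F \<otimes>\<^bsub>haut A\<^esub> htpy_class A F' = htpy_class A (qs_comp A F F')"
proof -
  have "(SOME F1. F1 \<in> htpy_class A F) \<in> htpy_class A F"
    using self_htpy_equiv_in_htpy_class[OF assms(1)] by (rule someI)
  moreover have "(SOME F1. F1 \<in> htpy_class A F') \<in> htpy_class A F'"
    using self_htpy_equiv_in_htpy_class[OF assms(2)] by (rule someI)
  ultimately have "qs_htpc A A (qs_comp A F F')
      (qs_comp A (SOME F1. F1 \<in> htpy_class A F) (SOME F1. F1 \<in> htpy_class A F'))"
    by (intro comp_cong) (simp_all add: htpy_class_def)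
  then show ?thesis
    by (simp add: haut_def htpy_class_eq)
qed

text \<open>There is exactly one arrow between any two objects of \<open>\<jmath>(X, S)\<close>, so a functor into it is
  determined by its object map.\<close>

definition jmath_functor :: "('o, 'm) qschemoid \<Rightarrow> ('o \<Rightarrow> 'a) \<Rightarrow> ('o, 'm, 'a, 'a \<times> 'a) qfunctor" where
  "jmath_functor A ob =
     \<lparr>fobj = (\<lambda>x\<in>Obj A. ob x), fmor = (\<lambda>f\<in>Mor A. (ob (qcod A f), ob (qdom A f)))\<rparr>"

lemma is_category_jmath: "is_category (jmath XS)"
  by (auto simp: is_category_def jmath_def)

lemma is_category_qsI: "is_category qsI"
  by (auto simp: is_category_def qsI_def)

lemma is_category_qs_prod:
  assumes "is_category A" "is_category B"
  shows "is_category (qs_prod A B)"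
  using assms unfolding is_category_def qs_prod_def by auto

lemma qs_morphism_jmath_iff:
  assumes "is_category A"
  shows "qs_morphism A (jmath (Y, R)) F \<longleftrightarrow>
    (\<exists>ob \<in> Obj A \<rightarrow> Y. F = jmath_functor A ob \<and>
       (\<forall>\<sigma>\<in>Part A. \<exists>\<tau>\<in>R. fmor (jmath_functor A ob) ` \<sigma> \<subseteq> \<tau>))"
proof
  assume "qs_morphism A (jmath (Y, R)) F"
  then have ob: "fobj F \<in> Obj A \<rightarrow>\<^sub>E Y" and mor: "fmor F \<in> Mor A \<rightarrow>\<^sub>E Y \<times> Y"
    and ends: "\<forall>f\<in>Mor A. snd (fmor F f) = fobj F (qdom A f) \<and> fst (fmor F f) = fobj F (qcod A f)"
    and blocks: "\<forall>\<sigma>\<in>Part A. \<exists>\<tau>\<in>R. fmor F ` \<sigma> \<subseteq> \<tau>"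
    unfolding qs_morphism_def by (simp_all add: jmath_def)
  have "fmor F = (\<lambda>f\<in>Mor A. (fobj F (qcod A f), fobj F (qdom A f)))"
  proof
    fix f
    show "fmor F f = (\<lambda>f\<in>Mor A. (fobj F (qcod A f), fobj F (qdom A f))) f"
    proof (cases "f \<in> Mor A")
      case True
      then show ?thesis using ends by (simp add: prod_eq_iff)
    next
      case False
      then show ?thesis using PiE_arb[OF mor False] by simp
    qed
  qed
  then have "F = jmath_functor A (fobj F)"
    using PiE_restrict[OF ob] by (cases F) (simp add: jmath_functor_def)
  moreover have "fobj F \<in> Obj A \<rightarrow> Y"
    using ob by (simp add: PiE_iff)
  ultimately show "\<exists>ob \<in> Obj A \<rightarrow> Y. F = jmath_functor A ob \<and>
       (\<forall>\<sigma>\<in>Part A. \<exists>\<tau>\<in>R. fmor (jmath_functor A ob) ` \<sigma> \<subseteq> \<tau>)"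
    using blocks by auto
next
  assume "\<exists>ob \<in> Obj A \<rightarrow> Y. F = jmath_functor A ob \<and>
       (\<forall>\<sigma>\<in>Part A. \<exists>\<tau>\<in>R. fmor (jmath_functor A ob) ` \<sigma> \<subseteq> \<tau>)"
  then obtain ob where ob: "ob \<in> Obj A \<rightarrow> Y" and F: "F = jmath_functor A ob"
    and blocks: "\<forall>\<sigma>\<in>Part A. \<exists>\<tau>\<in>R. fmor F ` \<sigma> \<subseteq> \<tau>"
    by blast
  have ends: "qdom A f \<in> Obj A" "qcod A f \<in> Obj A" if "f \<in> Mor A" for f
    using assms that unfolding is_category_def by blast+
  have ids: "qid A x \<in> Mor A" "qdom A (qid A x) = x" "qcod A (qid A x) = x" if "x \<in> Obj A" for x
    using assms that unfolding is_category_def by blast+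
  have comps: "qcomp A g f \<in> Mor A" "qdom A (qcomp A g f) = qdom A f" "qcod A (qcomp A g f) = qcod A g"
    if "f \<in> Mor A" "g \<in> Mor A" "qcod A f = qdom A g" for f g
    using assms that unfolding is_category_def by blast+
  show "qs_morphism A (jmath (Y, R)) F"
    unfolding qs_morphism_def
  proof (intro conjI)
    show "fobj F \<in> Obj A \<rightarrow>\<^sub>E Obj (jmath (Y, R))"
      using ob by (simp add: F jmath_functor_def jmath_def)
    show "fmor F \<in> Mor A \<rightarrow>\<^sub>E Mor (jmath (Y, R))"
      using ob ends by (auto simp: F jmath_functor_def jmath_def)
    show "\<forall>f\<in>Mor A. qdom (jmath (Y, R)) (fmor F f) = fobj F (qdom A f) \<and>
        qcod (jmath (Y, R)) (fmor F f) = fobj F (qcod A f)"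
      using ends by (simp add: F jmath_functor_def jmath_def)
    show "\<forall>f\<in>Mor A. \<forall>g\<in>Mor A. qcod A f = qdom A g \<longrightarrow>
        fmor F (qcomp A g f) = qcomp (jmath (Y, R)) (fmor F g) (fmor F f)"
      using comps by (simp add: F jmath_functor_def jmath_def)
    show "\<forall>x\<in>Obj A. fmor F (qid A x) = qid (jmath (Y, R)) (fobj F x)"
      using ids by (simp add: F jmath_functor_def jmath_def)
    show "\<forall>\<sigma>\<in>Part A. \<exists>\<tau>\<in>Part (jmath (Y, R)). fmor F ` \<sigma> \<subseteq> \<tau>"
      using blocks by (simp add: jmath_def)
  qed
qed

lemma qs_comp_jmath_functor:
  assumes "\<And>x. x \<in> Obj A \<Longrightarrow> fobj K x \<in> Obj B" "\<And>f. f \<in> Mor A \<Longrightarrow> fmor K f \<in> Mor B"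
    "\<And>f. f \<in> Mor A \<Longrightarrow> qcod B (fmor K f) = fobj K (qcod A f)"
    "\<And>f. f \<in> Mor A \<Longrightarrow> qdom B (fmor K f) = fobj K (qdom A f)"
  shows "qs_comp A (jmath_functor B ob) K = jmath_functor A (\<lambda>x. ob (fobj K x))"
  using assms by (auto simp: qs_comp_def jmath_functor_def compose_def intro!: restrict_ext)

text \<open>\<open>\<phi>\<close> maps every block \<open>G\<^sub>f\<close> into a block. On the carrier this says
  \<open>\<phi> x = \<psi> x \<otimes> \<phi> \<one>\<close> for an endomorphism \<open>\<psi>\<close> (see affine_map_normalize_hom).\<close>

definition affine_map :: "('a, 'b) monoid_scheme \<Rightarrow> ('a \<Rightarrow> 'a) \<Rightarrow> bool" where
  "affine_map G \<phi> \<longleftrightarrow> (\<forall>k\<in>carrier G. \<forall>l\<in>carrier G.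
      inv\<^bsub>G\<^esub> (\<phi> k) \<otimes>\<^bsub>G\<^esub> \<phi> l = inv\<^bsub>G\<^esub> (\<phi> \<one>\<^bsub>G\<^esub>) \<otimes>\<^bsub>G\<^esub> \<phi> (inv\<^bsub>G\<^esub> k \<otimes>\<^bsub>G\<^esub> l))"

context group
begin

lemma affine_mapD:
  "affine_map G \<phi> \<Longrightarrow> k \<in> carrier G \<Longrightarrow> l \<in> carrier G \<Longrightarrow>
    inv (\<phi> k) \<otimes> \<phi> l = inv (\<phi> \<one>) \<otimes> \<phi> (inv k \<otimes> l)"
  unfolding affine_map_def by blast

lemma affine_map_mult:
  assumes "affine_map G \<phi>" "\<phi> \<in> carrier G \<rightarrow> carrier G" "x \<in> carrier G" "y \<in> carrier G"
  shows "\<phi> (x \<otimes> y) = \<phi> x \<otimes> (inv (\<phi> \<one>) \<otimes> \<phi> y)"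
proof -
  have "inv (\<phi> x) \<otimes> \<phi> (x \<otimes> y) = inv (\<phi> \<one>) \<otimes> \<phi> (inv x \<otimes> (x \<otimes> y))"
    using assms by (intro affine_mapD) simp_all
  also have "inv x \<otimes> (x \<otimes> y) = y"
    using assms(3,4) by (simp add: m_assoc[symmetric])
  finally have "inv (\<phi> x) \<otimes> \<phi> (x \<otimes> y) = inv (\<phi> \<one>) \<otimes> \<phi> y" .
  moreover have "\<phi> x \<in> carrier G" "\<phi> (x \<otimes> y) \<in> carrier G" "inv (\<phi> \<one>) \<otimes> \<phi> y \<in> carrier G"
    using assms by auto
  ultimately show ?thesis
    using inv_solve_left' by blast
qed

lemma hom_imp_affine_map:
  assumes "\<sigma> \<in> hom G G"
  shows "affine_map G \<sigma>"
proof -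
  interpret group_hom G G \<sigma>
    using assms by (simp add: group_hom_def group_hom_axioms_def is_group)
  show ?thesis
    unfolding affine_map_def by (simp add: hom_inv hom_mult)
qed

lemma affine_map_normalize_hom:
  assumes "affine_map G \<phi>" "\<phi> \<in> carrier G \<rightarrow> carrier G"
  shows "(\<lambda>x\<in>carrier G. \<phi> x \<otimes> inv (\<phi> \<one>)) \<in> hom G G"
proof (rule homI)
  fix x y
  assume xy: "x \<in> carrier G" "y \<in> carrier G"
  have "\<phi> x \<in> carrier G" "\<phi> y \<in> carrier G" "\<phi> \<one> \<in> carrier G"
    using assms(2) xy by auto
  then have "(\<phi> x \<otimes> inv (\<phi> \<one>)) \<otimes> (\<phi> y \<otimes> inv (\<phi> \<one>)) = \<phi> (x \<otimes> y) \<otimes> inv (\<phi> \<one>)"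
    using affine_map_mult[OF assms xy] by (simp add: m_assoc)
  with xy show "(\<lambda>x\<in>carrier G. \<phi> x \<otimes> inv (\<phi> \<one>)) (x \<otimes> y) =
    (\<lambda>x\<in>carrier G. \<phi> x \<otimes> inv (\<phi> \<one>)) x \<otimes> (\<lambda>x\<in>carrier G. \<phi> x \<otimes> inv (\<phi> \<one>)) y"
    by simp
qed (use assms(2) in auto)

abbreviation J where "J \<equiv> jmath (group_scheme G)"

abbreviation map_functor :: "('a \<Rightarrow> 'a) \<Rightarrow> ('a, 'a \<times> 'a, 'a, 'a \<times> 'a) qfunctor" where
  "map_functor \<phi> \<equiv> jmath_functor J \<phi>"

lemma jmath_group_scheme_simps [simp]:
  "Obj J = carrier G" "Mor J = carrier G \<times> carrier G" "qdom J = snd" "qcod J = fst"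
  "qcomp J = (\<lambda>g f. (fst g, snd f))" "qid J = (\<lambda>x. (x, x))" "Part J = group_rel G ` carrier G"
  by (simp_all add: jmath_def group_scheme_def)

lemma mem_group_rel_iff [simp]:
  "(k, l) \<in> group_rel G f \<longleftrightarrow> k \<in> carrier G \<and> l \<in> carrier G \<and> inv k \<otimes> l = f"
  by (simp add: group_rel_def)

lemma fmor_map_functor [simp]:
  "k \<in> carrier G \<Longrightarrow> l \<in> carrier G \<Longrightarrow> fmor (map_functor \<phi>) (k, l) = (\<phi> k, \<phi> l)"
  by (simp add: jmath_functor_def)

lemma map_functor_eq_iff: "map_functor \<phi> = map_functor \<psi> \<longleftrightarrow> (\<forall>x\<in>carrier G. \<phi> x = \<psi> x)"
proof
  assume eq: "map_functor \<phi> = map_functor \<psi>"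
  show "\<forall>x\<in>carrier G. \<phi> x = \<psi> x"
  proof
    fix x
    assume "x \<in> carrier G"
    moreover have "fobj (map_functor \<phi>) x = fobj (map_functor \<psi>) x"
      using eq by simp
    ultimately show "\<phi> x = \<psi> x"
      by (simp add: jmath_functor_def)
  qed
next
  assume "\<forall>x\<in>carrier G. \<phi> x = \<psi> x"
  then show "map_functor \<phi> = map_functor \<psi>"
    by (auto simp: jmath_functor_def intro!: restrict_ext)
qed

lemma map_functor_preserves_blocks_iff:
  assumes "\<phi> \<in> carrier G \<rightarrow> carrier G"
  shows "(\<forall>\<sigma>\<in>group_rel G ` carrier G. \<exists>\<tau>\<in>group_rel G ` carrier G. fmor (map_functor \<phi>) ` \<sigma> \<subseteq> \<tau>)
    \<longleftrightarrow> affine_map G \<phi>"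
proof
  assume blocks: "\<forall>\<sigma>\<in>group_rel G ` carrier G. \<exists>\<tau>\<in>group_rel G ` carrier G. fmor (map_functor \<phi>) ` \<sigma> \<subseteq> \<tau>"
  show "affine_map G \<phi>"
    unfolding affine_map_def
  proof (intro ballI)
    fix k l
    assume kl: "k \<in> carrier G" "l \<in> carrier G"
    obtain g where "fmor (map_functor \<phi>) ` group_rel G (inv k \<otimes> l) \<subseteq> group_rel G g"
      using blocks kl by blast
    moreover have "(k, l) \<in> group_rel G (inv k \<otimes> l)" "(\<one>, inv k \<otimes> l) \<in> group_rel G (inv k \<otimes> l)"
      using kl by simp_all
    ultimately have "(\<phi> k, \<phi> l) \<in> group_rel G g" "(\<phi> \<one>, \<phi> (inv k \<otimes> l)) \<in> group_rel G g"
      using kl by (force simp del: mem_group_rel_iff)+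
    then show "inv (\<phi> k) \<otimes> \<phi> l = inv (\<phi> \<one>) \<otimes> \<phi> (inv k \<otimes> l)"
      by simp
  qed
next
  assume affine: "affine_map G \<phi>"
  show "\<forall>\<sigma>\<in>group_rel G ` carrier G. \<exists>\<tau>\<in>group_rel G ` carrier G. fmor (map_functor \<phi>) ` \<sigma> \<subseteq> \<tau>"
  proof
    fix \<sigma>
    assume "\<sigma> \<in> group_rel G ` carrier G"
    then obtain f where f: "f \<in> carrier G" "\<sigma> = group_rel G f"
      by blast
    have "fmor (map_functor \<phi>) ` \<sigma> \<subseteq> group_rel G (inv (\<phi> \<one>) \<otimes> \<phi> f)"
    proof
      fix p
      assume "p \<in> fmor (map_functor \<phi>) ` \<sigma>"
      then obtain k l where kl: "k \<in> carrier G" "l \<in> carrier G" "inv k \<otimes> l = f" "p = (\<phi> k, \<phi> l)"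
        using f by auto
      moreover have "\<phi> k \<in> carrier G" "\<phi> l \<in> carrier G"
        using assms kl by auto
      ultimately show "p \<in> group_rel G (inv (\<phi> \<one>) \<otimes> \<phi> f)"
        using affine_mapD[OF affine kl(1,2)] by simp
    qed
    moreover have "inv (\<phi> \<one>) \<otimes> \<phi> f \<in> carrier G"
      using f assms by auto
    ultimately show "\<exists>\<tau>\<in>group_rel G ` carrier G. fmor (map_functor \<phi>) ` \<sigma> \<subseteq> \<tau>"
      by blast
  qed
qed

lemma qs_morphism_iff_affine_map:
  "qs_morphism J J F \<longleftrightarrow> (\<exists>\<phi>\<in>carrier G \<rightarrow> carrier G. affine_map G \<phi> \<and> F = map_functor \<phi>)"
proof -
  have "jmath (carrier G, group_rel G ` carrier G) = J"
    by (simp add: group_scheme_def)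
  then have "qs_morphism J J F \<longleftrightarrow> (\<exists>\<phi>\<in>carrier G \<rightarrow> carrier G. F = map_functor \<phi> \<and>
      (\<forall>\<sigma>\<in>group_rel G ` carrier G. \<exists>\<tau>\<in>group_rel G ` carrier G. fmor (map_functor \<phi>) ` \<sigma> \<subseteq> \<tau>))"
    using qs_morphism_jmath_iff[OF is_category_jmath, of "group_scheme G" "carrier G" "group_rel G ` carrier G" F]
    by simp
  then show ?thesis
    using map_functor_preserves_blocks_iff by blast
qed

lemma qs_comp_map_functor:
  assumes "\<psi> \<in> carrier G \<rightarrow> carrier G"
  shows "qs_comp J (map_functor \<phi>) (map_functor \<psi>) = map_functor (\<lambda>x. \<phi> (\<psi> x))"
proof -
  have "qs_comp J (map_functor \<phi>) (map_functor \<psi>) = map_functor (\<lambda>x. \<phi> (fobj (map_functor \<psi>) x))"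
    by (rule qs_comp_jmath_functor) (use assms in \<open>auto simp: jmath_functor_def\<close>)
  also have "\<dots> = map_functor (\<lambda>x. \<phi> (\<psi> x))"
    by (rule iffD2[OF map_functor_eq_iff]) (simp add: jmath_functor_def)
  finally show ?thesis .
qed

lemma qs_id_eq_map_functor: "qs_id J = map_functor (\<lambda>x. x)"
  by (simp add: qs_id_def jmath_functor_def)

abbreviation cylinder where "cylinder \<equiv> qs_prod J qsI"

lemma cylinder_simps [simp]:
  "Obj cylinder = carrier G \<times> {0, 1}"
  "Mor cylinder = (carrier G \<times> carrier G) \<times> {(0, 0), (1, 1), (0, 1)}"
  "qdom cylinder = (\<lambda>(f, g). (snd f, fst g))" "qcod cylinder = (\<lambda>(f, g). (fst f, snd g))"
  "Part cylinder = {\<sigma> \<times> \<tau> | \<sigma> \<tau>. \<sigma> \<in> group_rel G ` carrier G \<and> \<tau> \<in> {{m} | m. m \<in> {(0, 0), (1, 1), (0, 1)}}}"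
  by (simp_all add: qs_prod_def qsI_def)

lemma qs_morphism_cylinder_iff:
  "qs_morphism cylinder J H \<longleftrightarrow> (\<exists>h \<in> carrier G \<times> {0, 1} \<rightarrow> carrier G. H = jmath_functor cylinder h \<and>
     (\<forall>\<sigma>\<in>Part cylinder. \<exists>\<tau>\<in>group_rel G ` carrier G. fmor (jmath_functor cylinder h) ` \<sigma> \<subseteq> \<tau>))"
proof -
  have "jmath (carrier G, group_rel G ` carrier G) = J"
    by (simp add: group_scheme_def)
  moreover have "is_category cylinder"
    by (intro is_category_qs_prod is_category_jmath is_category_qsI)
  ultimately show ?thesis
    using qs_morphism_jmath_iff[of cylinder "carrier G" "group_rel G ` carrier G" H] by simp
qed

lemma qs_comp_cylinder_eps:
  assumes "i \<in> {0, 1}"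
  shows "qs_comp J (jmath_functor cylinder h) (qs_eps J i) = map_functor (\<lambda>x. h (x, i))"
proof -
  have "qs_comp J (jmath_functor cylinder h) (qs_eps J i) = map_functor (\<lambda>x. h (fobj (qs_eps J i) x))"
    by (rule qs_comp_jmath_functor) (use assms in \<open>auto simp: qs_eps_def\<close>)
  also have "\<dots> = map_functor (\<lambda>x. h (x, i))"
    by (rule iffD2[OF map_functor_eq_iff]) (simp add: qs_eps_def)
  finally show ?thesis .
qed

lemma qs_homotopy_right_translation:
  assumes "qs_homotopy J J F F' H"
  obtains \<phi> c where "\<phi> \<in> carrier G \<rightarrow> carrier G" "c \<in> carrier G"
    "F = map_functor \<phi>" "F' = map_functor (\<lambda>x. \<phi> x \<otimes> c)"
proof -
  obtain h where h: "h \<in> carrier G \<times> {0, 1} \<rightarrow> carrier G" and H: "H = jmath_functor cylinder h"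
    and blocks: "\<forall>\<sigma>\<in>Part cylinder. \<exists>\<tau>\<in>group_rel G ` carrier G. fmor H ` \<sigma> \<subseteq> \<tau>"
  proof -
    have "qs_morphism cylinder J H"
      using assms unfolding qs_homotopy_def by blast
    then show thesis
      unfolding qs_morphism_cylinder_iff using that by blast
  qed
  \<comment> \<open>All arrows \<open>((x, x), (0, 1))\<close> lie in one block of the cylinder.\<close>
  have "group_rel G \<one> \<times> {(0, 1)} \<in> Part cylinder"
    by auto
  then obtain g where g: "g \<in> carrier G" "fmor H ` (group_rel G \<one> \<times> {(0, 1)}) \<subseteq> group_rel G g"
    using blocks by blast
  have h1: "h (x, 1) = h (x, 0) \<otimes> inv g" if x: "x \<in> carrier G" for x
  proof -
    have "fmor H ((x, x), (0, 1)) \<in> fmor H ` (group_rel G \<one> \<times> {(0, 1)})"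
      using x by simp
    moreover have "fmor H ((x, x), (0, 1)) = (h (x, 1), h (x, 0))"
      using x by (simp add: H jmath_functor_def)
    ultimately have "(h (x, 1), h (x, 0)) \<in> group_rel G g"
      using g(2) by (metis subsetD)
    then have "inv (h (x, 1)) \<otimes> h (x, 0) = g" and hx: "h (x, 1) \<in> carrier G" "h (x, 0) \<in> carrier G"
      by simp_all
    then have "h (x, 0) = h (x, 1) \<otimes> g"
      using inv_solve_left'[OF g(1) hx] by blast
    then show ?thesis
      using inv_solve_right[OF hx(1,2) g(1)] by blast
  qed
  show thesis
  proof
    show "(\<lambda>x. h (x, 0)) \<in> carrier G \<rightarrow> carrier G" "inv g \<in> carrier G"
      using h g(1) by (simp_all add: Pi_iff)
    show "F = map_functor (\<lambda>x. h (x, 0))"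
      using assms qs_comp_cylinder_eps[of 0] unfolding qs_homotopy_def H by simp
    have "F' = map_functor (\<lambda>x. h (x, 1))"
      using assms qs_comp_cylinder_eps[of 1] unfolding qs_homotopy_def H by simp
    also have "\<dots> = map_functor (\<lambda>x. h (x, 0) \<otimes> inv g)"
      by (rule iffD2[OF map_functor_eq_iff]) (use h1 in blast)
    finally show "F' = map_functor (\<lambda>x. h (x, 0) \<otimes> inv g)" .
  qed
qed

lemma ex_qs_homotopy_right_translation:
  assumes \<phi>: "\<phi> \<in> carrier G \<rightarrow> carrier G" and affine: "affine_map G \<phi>" and d: "d \<in> carrier G"
  shows "\<exists>H. qs_homotopy J J (map_functor \<phi>) (map_functor (\<lambda>x. \<phi> x \<otimes> d)) H"
proof -
  define e where "e i = (if i = 0 then \<one> else d)" for i :: nat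
  define h where "h = (\<lambda>(x, i). \<phi> x \<otimes> e i)"
  have e: "e i \<in> carrier G" for i
    using d by (simp add: e_def)
  have h: "h \<in> carrier G \<times> {0, 1::nat} \<rightarrow> carrier G"
  proof
    fix p
    assume "p \<in> carrier G \<times> {0, 1::nat}"
    then show "h p \<in> carrier G"
      using \<phi> e by (auto simp: h_def Pi_iff)
  qed
  have "\<exists>\<tau>\<in>group_rel G ` carrier G. fmor (jmath_functor cylinder h) ` \<sigma> \<subseteq> \<tau>"
    if block: "\<sigma> \<in> Part cylinder" for \<sigma>
  proof -
    obtain f m where \<sigma>: "\<sigma> = group_rel G f \<times> {m}" and f: "f \<in> carrier G"
      and m: "m \<in> {(0, 0), (1, 1), (0, 1)}"
      using block by auto
    obtain i j where ij: "m = (i, j)"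
      by fastforce
    define g where "g = inv (e j) \<otimes> (inv (\<phi> \<one>) \<otimes> \<phi> f) \<otimes> e i"
    have "fmor (jmath_functor cylinder h) ` \<sigma> \<subseteq> group_rel G g"
    proof
      fix p
      assume "p \<in> fmor (jmath_functor cylinder h) ` \<sigma>"
      then obtain k l where kl: "k \<in> carrier G" "l \<in> carrier G" "inv k \<otimes> l = f"
        and p: "p = (\<phi> k \<otimes> e j, \<phi> l \<otimes> e i)"
        using \<sigma> ij m by (auto simp: jmath_functor_def h_def)
      have \<phi>kl: "\<phi> k \<in> carrier G" "\<phi> l \<in> carrier G"
        using \<phi> kl by auto
      have "inv (\<phi> k \<otimes> e j) \<otimes> (\<phi> l \<otimes> e i) = inv (e j) \<otimes> (inv (\<phi> k) \<otimes> \<phi> l) \<otimes> e i"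
        using \<phi>kl e by (simp add: inv_mult_group m_assoc)
      also have "\<dots> = g"
        using affine_mapD[OF affine kl(1,2)] kl(3) by (simp add: g_def)
      finally show "p \<in> group_rel G g"
        using \<phi>kl e p by simp
    qed
    moreover have "g \<in> carrier G"
      using \<phi> f e by (simp add: g_def Pi_iff)
    ultimately show ?thesis
      by blast
  qed
  then have "qs_morphism cylinder J (jmath_functor cylinder h)"
    using h unfolding qs_morphism_cylinder_iff by blast
  moreover have "qs_comp J (jmath_functor cylinder h) (qs_eps J 0) = map_functor \<phi>"
  proof -
    have "qs_comp J (jmath_functor cylinder h) (qs_eps J 0) = map_functor (\<lambda>x. \<phi> x \<otimes> \<one>)"
      using qs_comp_cylinder_eps[of 0 h] by (simp add: h_def e_def)
    also have "\<dots> = map_functor \<phi>"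
      by (rule iffD2[OF map_functor_eq_iff]) (use \<phi> in \<open>simp add: Pi_iff\<close>)
    finally show ?thesis .
  qed
  moreover have "qs_comp J (jmath_functor cylinder h) (qs_eps J 1) = map_functor (\<lambda>x. \<phi> x \<otimes> d)"
    using qs_comp_cylinder_eps[of 1 h] by (simp add: h_def e_def)
  ultimately show ?thesis
    unfolding qs_homotopy_def by blast
qed

lemma qs_sim_right_translation:
  assumes sim: "(map_functor \<phi>, F') \<in> qs_sim J J" and \<phi>: "\<phi> \<in> carrier G \<rightarrow> carrier G"
  shows "\<exists>c\<in>carrier G. F' = map_functor (\<lambda>x. \<phi> x \<otimes> c)"
proof -
  obtain H where "qs_homotopy J J (map_functor \<phi>) F' H \<or> qs_homotopy J J F' (map_functor \<phi>) H"
    using sim unfolding qs_sim_def by blast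
  then show ?thesis
  proof
    assume "qs_homotopy J J (map_functor \<phi>) F' H"
    then obtain \<psi> c where c: "c \<in> carrier G"
      and \<psi>: "map_functor \<phi> = map_functor \<psi>" and F': "F' = map_functor (\<lambda>x. \<psi> x \<otimes> c)"
      by (rule qs_homotopy_right_translation)
    have "F' = map_functor (\<lambda>x. \<phi> x \<otimes> c)"
      unfolding F' by (rule iffD2[OF map_functor_eq_iff]) (use \<psi> in \<open>simp add: map_functor_eq_iff\<close>)
    with c show ?thesis
      by blast
  next
    assume "qs_homotopy J J F' (map_functor \<phi>) H"
    then obtain \<psi> c where \<psi>: "\<psi> \<in> carrier G \<rightarrow> carrier G" and c: "c \<in> carrier G"
      and F': "F' = map_functor \<psi>" and \<phi>\<psi>: "map_functor \<phi> = map_functor (\<lambda>x. \<psi> x \<otimes> c)"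
      by (rule qs_homotopy_right_translation)
    have "\<psi> x = \<phi> x \<otimes> inv c" if x: "x \<in> carrier G" for x
    proof -
      have "\<phi> x = \<psi> x \<otimes> c"
        using \<phi>\<psi> x by (simp add: map_functor_eq_iff)
      moreover have "\<phi> x \<in> carrier G" "\<psi> x \<in> carrier G"
        using \<phi> \<psi> x by auto
      ultimately show ?thesis
        using inv_solve_right[OF _ _ c] by blast
    qed
    then have "F' = map_functor (\<lambda>x. \<phi> x \<otimes> inv c)"
      unfolding F' by (rule iffD2[OF map_functor_eq_iff, rule_format])
    with c show ?thesis
      by blast
  qed
qed

lemma qs_htpc_map_functor_iff:
  assumes \<phi>: "\<phi> \<in> carrier G \<rightarrow> carrier G" and affine: "affine_map G \<phi>"
  shows "qs_htpc J J (map_functor \<phi>) F' \<longleftrightarrow> (\<exists>d\<in>carrier G. F' = map_functor (\<lambda>x. \<phi> x \<otimes> d))"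
proof
  assume "qs_htpc J J (map_functor \<phi>) F'"
  then have "(map_functor \<phi>, F') \<in> (qs_sim J J)\<^sup>*"
    unfolding qs_htpc_def .
  then show "\<exists>d\<in>carrier G. F' = map_functor (\<lambda>x. \<phi> x \<otimes> d)"
  proof (induction rule: rtrancl_induct)
    case base
    have "map_functor \<phi> = map_functor (\<lambda>x. \<phi> x \<otimes> \<one>)"
      by (rule iffD2[OF map_functor_eq_iff]) (use \<phi> in \<open>simp add: Pi_iff\<close>)
    then show ?case
      by blast
  next
    case (step F1 F2)
    then obtain d where d: "d \<in> carrier G" and F1: "F1 = map_functor (\<lambda>x. \<phi> x \<otimes> d)"
      by blast
    have "(\<lambda>x. \<phi> x \<otimes> d) \<in> carrier G \<rightarrow> carrier G"
      using \<phi> d by (simp add: Pi_iff)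
    then obtain c where c: "c \<in> carrier G" and F2: "F2 = map_functor (\<lambda>x. \<phi> x \<otimes> d \<otimes> c)"
      using qs_sim_right_translation step.hyps(2) unfolding F1 by blast
    have "F2 = map_functor (\<lambda>x. \<phi> x \<otimes> (d \<otimes> c))"
      unfolding F2 by (rule iffD2[OF map_functor_eq_iff]) (use \<phi> c d in \<open>simp add: Pi_iff m_assoc\<close>)
    with c d show ?case
      by blast
  qed
next
  assume "\<exists>d\<in>carrier G. F' = map_functor (\<lambda>x. \<phi> x \<otimes> d)"
  then have "(map_functor \<phi>, F') \<in> qs_sim J J"
    using ex_qs_homotopy_right_translation[OF \<phi> affine] unfolding qs_sim_def by blast
  then show "qs_htpc J J (map_functor \<phi>) F'"
    unfolding qs_htpc_def by blast
qed

lemma affine_map_comp: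
  assumes "affine_map G \<phi>" "affine_map G \<psi>" "\<psi> \<in> carrier G \<rightarrow> carrier G"
  shows "affine_map G (\<lambda>x. \<phi> (\<psi> x))"
  unfolding affine_map_def
proof (intro ballI)
  fix k l
  assume kl: "k \<in> carrier G" "l \<in> carrier G"
  have \<psi>: "\<psi> \<one> \<in> carrier G" "\<psi> (inv k \<otimes> l) \<in> carrier G" "\<psi> k \<in> carrier G" "\<psi> l \<in> carrier G"
    using assms(3) kl by auto
  have "inv (\<phi> (\<psi> k)) \<otimes> \<phi> (\<psi> l) = inv (\<phi> \<one>) \<otimes> \<phi> (inv (\<psi> k) \<otimes> \<psi> l)"
    using affine_mapD[OF assms(1) \<psi>(3,4)] .
  also have "\<dots> = inv (\<phi> \<one>) \<otimes> \<phi> (inv (\<psi> \<one>) \<otimes> \<psi> (inv k \<otimes> l))"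
    using affine_mapD[OF assms(2) kl] by simp
  also have "\<dots> = inv (\<phi> (\<psi> \<one>)) \<otimes> \<phi> (\<psi> (inv k \<otimes> l))"
    using affine_mapD[OF assms(1) \<psi>(1,2)] by simp
  finally show "inv (\<phi> (\<psi> k)) \<otimes> \<phi> (\<psi> l) = inv (\<phi> (\<psi> \<one>)) \<otimes> \<phi> (\<psi> (inv k \<otimes> l))" .
qed

lemma qs_htpc_comp_cong:
  assumes \<phi>: "\<phi> \<in> carrier G \<rightarrow> carrier G" "affine_map G \<phi>"
    and \<psi>: "\<psi> \<in> carrier G \<rightarrow> carrier G" "affine_map G \<psi>"
    and F1: "qs_htpc J J (map_functor \<phi>) F1" and F2: "qs_htpc J J (map_functor \<psi>) F2"
  shows "qs_htpc J J (qs_comp J (map_functor \<phi>) (map_functor \<psi>)) (qs_comp J F1 F2)"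
proof -
  obtain d1 where d1: "d1 \<in> carrier G" and F1: "F1 = map_functor (\<lambda>x. \<phi> x \<otimes> d1)"
    using F1 qs_htpc_map_functor_iff[OF \<phi>] by blast
  obtain d2 where d2: "d2 \<in> carrier G" and F2: "F2 = map_functor (\<lambda>x. \<psi> x \<otimes> d2)"
    using F2 qs_htpc_map_functor_iff[OF \<psi>] by blast
  have \<psi>d2: "(\<lambda>x. \<psi> x \<otimes> d2) \<in> carrier G \<rightarrow> carrier G"
    using \<psi>(1) d2 by (simp add: Pi_iff)
  have "qs_comp J F1 F2 = map_functor (\<lambda>x. \<phi> (\<psi> x \<otimes> d2) \<otimes> d1)"
    unfolding F1 F2 by (rule qs_comp_map_functor[OF \<psi>d2])
  also have "\<dots> = map_functor (\<lambda>x. \<phi> (\<psi> x) \<otimes> (inv (\<phi> \<one>) \<otimes> \<phi> d2 \<otimes> d1))"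
  proof (rule iffD2[OF map_functor_eq_iff], intro ballI)
    fix x
    assume "x \<in> carrier G"
    then have "\<psi> x \<in> carrier G" "\<phi> (\<psi> x) \<in> carrier G"
      using \<phi>(1) \<psi>(1) by auto
    moreover have "\<phi> d2 \<in> carrier G" "\<phi> \<one> \<in> carrier G"
      using \<phi>(1) d2 by auto
    ultimately show "\<phi> (\<psi> x \<otimes> d2) \<otimes> d1 = \<phi> (\<psi> x) \<otimes> (inv (\<phi> \<one>) \<otimes> \<phi> d2 \<otimes> d1)"
      using affine_map_mult[OF \<phi>(2,1) _ d2] d1 by (simp add: m_assoc)
  qed
  finally have "qs_comp J F1 F2 = map_functor (\<lambda>x. \<phi> (\<psi> x) \<otimes> (inv (\<phi> \<one>) \<otimes> \<phi> d2 \<otimes> d1))" .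
  moreover have "inv (\<phi> \<one>) \<otimes> \<phi> d2 \<otimes> d1 \<in> carrier G"
    using \<phi>(1) d1 d2 by (simp add: Pi_iff)
  moreover have "(\<lambda>x. \<phi> (\<psi> x)) \<in> carrier G \<rightarrow> carrier G"
    using \<phi>(1) \<psi>(1) by (simp add: Pi_iff)
  ultimately show ?thesis
    unfolding qs_comp_map_functor[OF \<psi>(1)]
    using qs_htpc_map_functor_iff affine_map_comp[OF \<phi>(2) \<psi>(2,1)] by blast
qed

lemma bij_betw_right_translation: "c \<in> carrier G \<Longrightarrow> bij_betw (\<lambda>x. x \<otimes> c) (carrier G) (carrier G)"
  by (rule bij_betw_byWitness[where f' = "\<lambda>x. x \<otimes> inv c"]) (auto simp: m_assoc)

lemma affine_map_normalize_auto:
  assumes "affine_map G \<phi>" "\<phi> \<in> carrier G \<rightarrow> carrier G" "bij_betw \<phi> (carrier G) (carrier G)"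
  shows "(\<lambda>x\<in>carrier G. \<phi> x \<otimes> inv (\<phi> \<one>)) \<in> auto G"
proof -
  have "\<phi> \<one> \<in> carrier G"
    using assms(2) by auto
  then have "bij_betw ((\<lambda>y. y \<otimes> inv (\<phi> \<one>)) \<circ> \<phi>) (carrier G) (carrier G)"
    by (intro bij_betw_trans[OF assms(3)] bij_betw_right_translation) simp
  then have "bij_betw (\<lambda>x\<in>carrier G. \<phi> x \<otimes> inv (\<phi> \<one>)) (carrier G) (carrier G)"
    by (rule iffD1[OF bij_betw_cong, rotated]) simp
  with affine_map_normalize_hom[OF assms(1,2)] show ?thesis
    by (simp add: auto_def Bij_def)
qed

lemma bij_betw_if_right_translation_inverse:
  assumes \<phi>: "\<phi> \<in> carrier G \<rightarrow> carrier G" and \<phi>': "\<phi>' \<in> carrier G \<rightarrow> carrier G"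
    and d: "d \<in> carrier G" "\<And>x. x \<in> carrier G \<Longrightarrow> \<phi> (\<phi>' x) = x \<otimes> d"
    and d': "d' \<in> carrier G" "\<And>x. x \<in> carrier G \<Longrightarrow> \<phi>' (\<phi> x) = x \<otimes> d'"
  shows "bij_betw \<phi> (carrier G) (carrier G)"
proof (rule bij_betw_imageI)
  show "inj_on \<phi> (carrier G)"
  proof (rule inj_onI)
    fix x y
    assume xy: "x \<in> carrier G" "y \<in> carrier G" "\<phi> x = \<phi> y"
    then have "x \<otimes> d' = y \<otimes> d'"
      using d'(2) by metis
    with xy(1,2) d'(1) show "x = y"
      by simp
  qed
  show "\<phi> ` carrier G = carrier G"
  proof
    show "\<phi> ` carrier G \<subseteq> carrier G"
      using \<phi> by auto
    show "carrier G \<subseteq> \<phi> ` carrier G"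
    proof
      fix y
      assume y: "y \<in> carrier G"
      then have "y = \<phi> (\<phi>' (y \<otimes> inv d))"
        using d by (simp add: m_assoc)
      moreover have "\<phi>' (y \<otimes> inv d) \<in> carrier G"
        using \<phi>' y d(1) by auto
      ultimately show "y \<in> \<phi> ` carrier G"
        by blast
    qed
  qed
qed

lemma auto_funcset: "\<sigma> \<in> auto G \<Longrightarrow> \<sigma> \<in> carrier G \<rightarrow> carrier G"
  by (simp add: auto_def hom_def)

lemma auto_affine_map: "\<sigma> \<in> auto G \<Longrightarrow> affine_map G \<sigma>"
  by (simp add: auto_def hom_imp_affine_map)

lemma self_htpy_equiv_normalize_auto:
  assumes "F \<in> self_htpy_equiv J"
  obtains \<phi> where "\<phi> \<in> carrier G \<rightarrow> carrier G" "affine_map G \<phi>" "F = map_functor \<phi>"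
    "(\<lambda>x\<in>carrier G. \<phi> x \<otimes> inv (\<phi> \<one>)) \<in> auto G"
proof -
  obtain F' where "qs_morphism J J F" "qs_morphism J J F'"
    and FF': "qs_htpc J J (qs_comp J F F') (qs_id J)" and F'F: "qs_htpc J J (qs_comp J F' F) (qs_id J)"
    using assms unfolding self_htpy_equiv_def by blast
  then obtain \<phi> \<phi>' where \<phi>: "\<phi> \<in> carrier G \<rightarrow> carrier G" "affine_map G \<phi>" "F = map_functor \<phi>"
    and \<phi>': "\<phi>' \<in> carrier G \<rightarrow> carrier G" "affine_map G \<phi>'" "F' = map_functor \<phi>'"
    unfolding qs_morphism_iff_affine_map by blast
  have id: "(\<lambda>x. x) \<in> carrier G \<rightarrow> carrier G" "affine_map G (\<lambda>x. x)"
    by (simp_all add: affine_map_def)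
  have "qs_htpc J J (map_functor (\<lambda>x. x)) (map_functor (\<lambda>x. \<phi> (\<phi>' x)))"
    using qs_htpc_sym[OF FF'] unfolding \<phi>(3) \<phi>'(3) qs_comp_map_functor[OF \<phi>'(1)] qs_id_eq_map_functor .
  then obtain d where d: "d \<in> carrier G" "\<And>x. x \<in> carrier G \<Longrightarrow> \<phi> (\<phi>' x) = x \<otimes> d"
    unfolding qs_htpc_map_functor_iff[OF id] map_functor_eq_iff by blast
  have "qs_htpc J J (map_functor (\<lambda>x. x)) (map_functor (\<lambda>x. \<phi>' (\<phi> x)))"
    using qs_htpc_sym[OF F'F] unfolding \<phi>(3) \<phi>'(3) qs_comp_map_functor[OF \<phi>(1)] qs_id_eq_map_functor .
  then obtain d' where d': "d' \<in> carrier G" "\<And>x. x \<in> carrier G \<Longrightarrow> \<phi>' (\<phi> x) = x \<otimes> d'"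
    unfolding qs_htpc_map_functor_iff[OF id] map_functor_eq_iff by blast
  have "bij_betw \<phi> (carrier G) (carrier G)"
    using bij_betw_if_right_translation_inverse[OF \<phi>(1) \<phi>'(1) d d'] .
  with \<phi> show thesis
    using that affine_map_normalize_auto by blast
qed

lemma auto_self_htpy_equiv:
  assumes \<sigma>: "\<sigma> \<in> auto G"
  shows "map_functor \<sigma> \<in> self_htpy_equiv J"
proof -
  define \<tau> where "\<tau> = (\<lambda>x\<in>carrier G. inv_into (carrier G) \<sigma> x)"
  have \<tau>: "\<tau> \<in> auto G"
    using \<sigma> unfolding \<tau>_def auto_def by (simp add: restrict_inv_into_hom restrict_inv_into_Bij)
  have bij: "bij_betw \<sigma> (carrier G) (carrier G)"
    using \<sigma> by (simp add: auto_def Bij_def)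
  have morphism: "qs_morphism J J (map_functor \<rho>)" if "\<rho> \<in> auto G" for \<rho>
    unfolding qs_morphism_iff_affine_map using auto_funcset[OF that] auto_affine_map[OF that] by blast
  have "qs_comp J (map_functor \<sigma>) (map_functor \<tau>) = qs_id J"
    unfolding qs_comp_map_functor[OF auto_funcset[OF \<tau>]] qs_id_eq_map_functor
    by (rule iffD2[OF map_functor_eq_iff]) (use bij in \<open>simp add: \<tau>_def bij_betw_inv_into_right\<close>)
  moreover have "qs_comp J (map_functor \<tau>) (map_functor \<sigma>) = qs_id J"
    unfolding qs_comp_map_functor[OF auto_funcset[OF \<sigma>]] qs_id_eq_map_functor
    by (rule iffD2[OF map_functor_eq_iff]) (use auto_funcset[OF \<sigma>] bij in \<open>simp add: \<tau>_def bij_betw_inv_into_left Pi_iff\<close>)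
  ultimately show ?thesis
    unfolding self_htpy_equiv_def
    by (intro CollectI conjI exI[of _ "map_functor \<tau>"] morphism \<sigma> \<tau>) (simp_all add: qs_htpc_refl)
qed

definition haut_of_auto :: "('a \<Rightarrow> 'a) \<Rightarrow> ('a, 'a \<times> 'a, 'a, 'a \<times> 'a) qfunctor set" where
  "haut_of_auto \<sigma> = htpy_class J (map_functor \<sigma>)"

lemma haut_of_auto_in_carrier: "\<sigma> \<in> auto G \<Longrightarrow> haut_of_auto \<sigma> \<in> carrier (haut J)"
  by (simp add: haut_of_auto_def haut_def auto_self_htpy_equiv)

lemma haut_of_auto_compose:
  assumes \<sigma>: "\<sigma> \<in> auto G" and \<tau>: "\<tau> \<in> auto G"
  shows "haut_of_auto (compose (carrier G) \<sigma> \<tau>) = haut_of_auto \<sigma> \<otimes>\<^bsub>haut J\<^esub> haut_of_auto \<tau>"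
proof -
  have "map_functor (compose (carrier G) \<sigma> \<tau>) = qs_comp J (map_functor \<sigma>) (map_functor \<tau>)"
    unfolding qs_comp_map_functor[OF auto_funcset[OF \<tau>]]
    by (rule iffD2[OF map_functor_eq_iff]) (simp add: compose_def)
  moreover have "htpy_class J (map_functor \<sigma>) \<otimes>\<^bsub>haut J\<^esub> htpy_class J (map_functor \<tau>)
      = htpy_class J (qs_comp J (map_functor \<sigma>) (map_functor \<tau>))"
    using \<sigma> \<tau> by (intro haut_mult_htpy_class auto_self_htpy_equiv qs_htpc_comp_cong auto_funcset auto_affine_map)
  ultimately show ?thesis
    by (simp add: haut_of_auto_def)
qed

lemma inj_on_haut_of_auto: "inj_on haut_of_auto (auto G)"
proof (rule inj_onI)
  fix \<sigma> \<tau>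
  assume \<sigma>: "\<sigma> \<in> auto G" and \<tau>: "\<tau> \<in> auto G" and eq: "haut_of_auto \<sigma> = haut_of_auto \<tau>"
  have "map_functor \<tau> \<in> haut_of_auto \<sigma>"
    unfolding eq unfolding haut_of_auto_def by (rule self_htpy_equiv_in_htpy_class[OF auto_self_htpy_equiv[OF \<tau>]])
  then have "qs_htpc J J (map_functor \<sigma>) (map_functor \<tau>)"
    by (simp add: haut_of_auto_def htpy_class_def)
  then obtain d where d: "d \<in> carrier G" "\<And>x. x \<in> carrier G \<Longrightarrow> \<tau> x = \<sigma> x \<otimes> d"
    unfolding qs_htpc_map_functor_iff[OF auto_funcset[OF \<sigma>] auto_affine_map[OF \<sigma>]] map_functor_eq_iff
    by blast
  have "\<sigma> \<one> = \<one>" "\<tau> \<one> = \<one>"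
    using \<sigma> \<tau> by (simp_all add: auto_def hom_one)
  then have "d = \<one>"
    using d(2)[of \<one>] d(1) by simp
  then show "\<sigma> = \<tau>"
    using \<sigma> \<tau> d auto_funcset[OF \<sigma>]
    by (intro extensionalityI[of _ "carrier G"]) (auto simp: auto_def Bij_def Pi_iff)
qed

lemma haut_of_auto_image: "haut_of_auto ` auto G = carrier (haut J)"
proof
  show "haut_of_auto ` auto G \<subseteq> carrier (haut J)"
    using haut_of_auto_in_carrier by blast
  show "carrier (haut J) \<subseteq> haut_of_auto ` auto G"
  proof
    fix U
    assume "U \<in> carrier (haut J)"
    then obtain F where F: "F \<in> self_htpy_equiv J" and U: "U = htpy_class J F"
      by (auto simp: haut_def)
    from F obtain \<phi> where \<phi>: "\<phi> \<in> carrier G \<rightarrow> carrier G" "affine_map G \<phi>" "F = map_functor \<phi>"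
      and \<psi>: "(\<lambda>x\<in>carrier G. \<phi> x \<otimes> inv (\<phi> \<one>)) \<in> auto G"
      by (rule self_htpy_equiv_normalize_auto)
    have "inv (\<phi> \<one>) \<in> carrier G"
      using \<phi>(1) by auto
    moreover have "map_functor (\<lambda>x\<in>carrier G. \<phi> x \<otimes> inv (\<phi> \<one>)) = map_functor (\<lambda>x. \<phi> x \<otimes> inv (\<phi> \<one>))"
      by (rule iffD2[OF map_functor_eq_iff]) simp
    ultimately have "qs_htpc J J F (map_functor (\<lambda>x\<in>carrier G. \<phi> x \<otimes> inv (\<phi> \<one>)))"
      unfolding \<phi>(3) qs_htpc_map_functor_iff[OF \<phi>(1,2)] by blast
    then have "U = haut_of_auto (\<lambda>x\<in>carrier G. \<phi> x \<otimes> inv (\<phi> \<one>))"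
      unfolding U haut_of_auto_def by (rule htpy_class_eq)
    with \<psi> show "U \<in> haut_of_auto ` auto G"
      by blast
  qed
qed

lemma haut_of_auto_iso: "haut_of_auto \<in> iso (AutoGroup G) (haut J)"
proof (rule isoI)
  show "haut_of_auto \<in> hom (AutoGroup G) (haut J)"
    by (rule homI) (simp_all add: AutoGroup_def BijGroup_def haut_of_auto_in_carrier haut_of_auto_compose auto_def)
  show "bij_betw haut_of_auto (carrier (AutoGroup G)) (carrier (haut J))"
    using inj_on_haut_of_auto haut_of_auto_image by (simp add: AutoGroup_def BijGroup_def bij_betw_def)
qed

theorem haut_jmath_group_scheme: "group (haut J) \<and> haut J \<cong> AutoGroup G"
proof
  interpret Aut: group "AutoGroup G"
    by (rule AutoGroup)
  have "map_functor (\<lambda>x\<in>carrier G. x) = qs_id J"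
    unfolding qs_id_eq_map_functor by (rule iffD2[OF map_functor_eq_iff]) simp
  then have "haut_of_auto \<one>\<^bsub>AutoGroup G\<^esub> = \<one>\<^bsub>haut J\<^esub>"
    by (simp add: AutoGroup_def BijGroup_def haut_of_auto_def haut_def)
  then show "group (haut J)"
    using Aut.iso_imp_img_group[OF haut_of_auto_iso] by simp
  show "haut J \<cong> AutoGroup G"
    using Aut.iso_sym[OF is_isoI[OF haut_of_auto_iso]] .
qed

end

theorem corollary4p8:
  fixes G :: "('a, 'b) monoid_scheme"
  assumes "group G" and "finite (carrier G)"
  shows "group (haut (jmath (group_scheme G))) \<and> haut (jmath (group_scheme G)) \<cong> AutoGroup G"
  using group.haut_jmath_group_scheme[OF assms(1)] .

end
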